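(* Let $q$ be an odd prime, $n \geq 1$ an integer, $v = 3q^n$, and $k$ an odd positive integer. If there are integers $a_1, \ldots, a_k$ with $1 \leq a_j < v$ such that $\prod_{j=1}^k a_j = \prod_{j=1}^k (v - a_j)$, then there is an integer $m$ such that $2^m \equiv (-1)^{m+1} \pmod q$.
   Context: For a negative integer $m$, $2^m$ is understood in $\mathbb{Z}/q\mathbb{Z}$ as the $|m|$-th power of the multiplicative inverse of $2$ modulo $q$. *)

theory Defs
  imports "HOL-Number_Theory.Number_Theory"
begin

text \<open>For an integer exponent m and odd modulus q, the congruence 2^m = c (mod q) is
  understood in Z/qZ: for m < 0, 2^m is the |m|-th power of the inverse of 2 modulo q,
  so 2^m = c (mod q) iff c * 2^|m| = 1 (mod q).\<close>
definition pow2_int_cong :: "int \<Rightarrow> int \<Rightarrow> int \<Rightarrow> bool" where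
  "pow2_int_cong q m c \<longleftrightarrow>
     (if 0 \<le> m then [2 ^ nat m = c] (mod q) else [c * 2 ^ nat (- m) = 1] (mod q))"

definition neg_one_pow :: "int \<Rightarrow> int" where
  "neg_one_pow e = (if even e then 1 else -1)"

end

theory Submission
  imports Defs
begin

text \<open>Write \<open>a\<^sub>j = q^e u\<^sub>j\<close> and \<open>v - a\<^sub>j = q^e w\<^sub>j\<close> with \<open>q\<close> not dividing \<open>u\<^sub>j\<close>.
  Modulo \<open>q\<close>, \<open>w\<^sub>j \<equiv> -u\<^sub>j\<close> unless \<open>q^n\<close> divides \<open>a\<^sub>j\<close>; otherwise \<open>a\<^sub>j \<in> {q^n, 2q^n}\<close> gives
  \<open>w\<^sub>j = 2u\<^sub>j\<close> or \<open>2w\<^sub>j = u\<^sub>j\<close>. So \<open>w\<^sub>j/u\<^sub>j \<equiv> 2^t (-1)^(t+1)\<close> with \<open>t \<in> {-1,0,1}\<close>, encoded as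
  \<open>w 2^p \<equiv> (-1)^z 2^r u\<close> with exactly one of \<open>p, r, z\<close> equal to 1. The powers of \<open>q\<close> cancel
  from the hypothesis, so \<open>\<Prod>u\<^sub>j = \<Prod>w\<^sub>j\<close>, and multiplying the \<open>k\<close> congruences gives
  \<open>2^P \<equiv> (-1)^Z 2^R\<close> with \<open>P + R + Z = k\<close> odd: the claim for \<open>m = R - P\<close>.\<close>

lemma three_prime_power_complement_cong:
  fixes q a :: int
  assumes "prime q" and "\<not> q dvd 2" and "1 \<le> a" and "a < 3 * q ^ n"
  obtains e u w and p r z :: nat
  where "a = q ^ e * u" and "3 * q ^ n - a = q ^ e * w" and "\<not> q dvd u"
    and "p + r + z = 1" and "[w * 2 ^ p = (-1) ^ z * 2 ^ r * u] (mod q)"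
proof -
  have "a \<noteq> 0" and not_unit: "\<not> is_unit q" using assms(1,3) not_prime_unit by auto
  then obtain u where a: "a = q ^ multiplicity q a * u" and u: "\<not> q dvd u"
    using multiplicity_decompose' by metis
  show ?thesis
  proof (cases "multiplicity q a < n")
    case True
    define e where "e = multiplicity q a"
    have "3 * q ^ n - a = q ^ e * (3 * q ^ (n - e) - u)"
      using True a by (simp add: e_def right_diff_distrib mult.left_commute power_add[symmetric])
    moreover have "[3 * q ^ (n - e) - u = -u] (mod q)"
      using True by (simp add: e_def cong_iff_dvd_diff)
    ultimately show ?thesis
      using that[of e u "3 * q ^ (n - e) - u" 0 0 1] a u by (simp add: e_def)
  next
    case False
    then obtain c where c: "a = q ^ n * c"
      using multiplicity_dvd'[of n q a] by (auto elim: dvdE)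
    have "q ^ n > 0" using assms(1) prime_gt_0_int by simp
    moreover have "q ^ n * 0 < q ^ n * c" "q ^ n * c < q ^ n * 3"
      using assms(3,4) c by (simp_all add: mult.commute)
    ultimately have "0 < c" "c < 3" by (simp_all only: mult_less_cancel_left_pos)
    then consider "c = 1" | "c = 2" by linarith
    then show ?thesis
    proof cases
      case 1
      then show ?thesis using c not_unit that[of n 1 2 0 1 0] by simp
    next
      case 2
      then show ?thesis using c assms(2) that[of n 2 1 1 0 0] by simp
    qed
  qed
qed

lemma prod_cofactors_eq:
  fixes x y u w :: "'i \<Rightarrow> 'a :: idom" and e :: "'i \<Rightarrow> nat"
  assumes "c \<noteq> 0"
    and "\<And>j. j \<in> A \<Longrightarrow> x j = c ^ e j * u j \<and> y j = c ^ e j * w j"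
    and "(\<Prod>j\<in>A. x j) = (\<Prod>j\<in>A. y j)"
  shows "(\<Prod>j\<in>A. u j) = (\<Prod>j\<in>A. w j)"
proof -
  have "(\<Prod>j\<in>A. x j) = c ^ (\<Sum>j\<in>A. e j) * (\<Prod>j\<in>A. u j)"
       "(\<Prod>j\<in>A. y j) = c ^ (\<Sum>j\<in>A. e j) * (\<Prod>j\<in>A. w j)"
    using assms(2) by (simp_all add: prod.distrib power_sum cong: prod.cong)
  then show ?thesis using assms(1,3) by simp
qed

lemma prod_cong_pow2_signs:
  fixes q :: int and u w :: "'i \<Rightarrow> int" and p r z :: "'i \<Rightarrow> nat"
  assumes "\<And>j. j \<in> A \<Longrightarrow> [w j * 2 ^ p j = (-1) ^ z j * 2 ^ r j * u j] (mod q)"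
    and "\<And>j. j \<in> A \<Longrightarrow> coprime (u j) q"
    and "(\<Prod>j\<in>A. w j) = (\<Prod>j\<in>A. u j)"
  shows "[2 ^ (\<Sum>j\<in>A. p j) = (-1) ^ (\<Sum>j\<in>A. z j) * 2 ^ (\<Sum>j\<in>A. r j)] (mod q)"
proof -
  have "[(\<Prod>j\<in>A. w j * 2 ^ p j) = (\<Prod>j\<in>A. (-1) ^ z j * 2 ^ r j * u j)] (mod q)"
    using assms(1) by (rule cong_prod)
  then have "[2 ^ (\<Sum>j\<in>A. p j) * (\<Prod>j\<in>A. u j)
      = (-1) ^ (\<Sum>j\<in>A. z j) * 2 ^ (\<Sum>j\<in>A. r j) * (\<Prod>j\<in>A. u j)] (mod q)"
    using assms(3) by (simp add: prod.distrib power_sum mult.commute)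
  moreover have "coprime (\<Prod>j\<in>A. u j) q"
    using assms(2) by (rule prod_coprime_left)
  ultimately show ?thesis by (simp add: cong_mult_rcancel)
qed

lemma pow2_int_cong_of_cong:
  fixes q :: int and p r z :: nat
  assumes "coprime 2 q" and "odd (p + r + z)"
    and "[2 ^ p = (-1) ^ z * 2 ^ r] (mod q)"
  shows "pow2_int_cong q (int r - int p) (neg_one_pow (int r - int p + 1))"
proof -
  define c :: int where "c = (-1) ^ z"
  have "c * c = 1" by (simp add: c_def flip: power_mult_distrib)
  have "neg_one_pow (int r - int p + 1) = c"
    using assms(2) by (cases "even z"; simp add: neg_one_pow_def c_def; presburger)
  moreover have "pow2_int_cong q (int r - int p) c"
  proof (cases "p \<le> r")
    case True
    then have "[2 ^ p * 1 = 2 ^ p * (c * 2 ^ (r - p))] (mod q)"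
      using assms(3) by (simp add: c_def mult.left_commute flip: power_add)
    then have "[1 = c * 2 ^ (r - p)] (mod q)"
      using cong_mult_lcancel[of "2 ^ p" q] coprime_power_left_iff[of 2 p q] assms(1) by blast
    then have "[c * 1 = c * (c * 2 ^ (r - p))] (mod q)" by (rule cong_scalar_left)
    then show ?thesis
      using True \<open>c * c = 1\<close> by (simp add: pow2_int_cong_def cong_sym mult.assoc[symmetric] nat_diff_distrib)
  next
    case False
    then have "[2 ^ r * 2 ^ (p - r) = 2 ^ r * c] (mod q)"
      using assms(3) by (simp add: c_def mult.commute flip: power_add)
    then have "[2 ^ (p - r) = c] (mod q)"
      using cong_mult_lcancel[of "2 ^ r" q] coprime_power_left_iff[of 2 r q] assms(1) by blast
    then have "[c * 2 ^ (p - r) = c * c] (mod q)" by (rule cong_scalar_left)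
    then show ?thesis
      using False \<open>c * c = 1\<close> by (simp add: pow2_int_cong_def nat_diff_distrib)
  qed
  ultimately show ?thesis by simp
qed

theorem lemma4p11:
  fixes q :: int and n k :: nat and a :: "nat \<Rightarrow> int"
  assumes "prime q" and "odd q" and "n \<ge> 1"
    and "odd k"
    and "\<forall>j\<in>{1..k}. 1 \<le> a j \<and> a j < 3 * q ^ n"
    and "(\<Prod>j=1..k. a j) = (\<Prod>j=1..k. 3 * q ^ n - a j)"
  shows "\<exists>m::int. pow2_int_cong q m (neg_one_pow (m + 1))"
proof -
  have "coprime 2 q" using assms(1,2) by auto
  then have "\<not> q dvd 2"
    using coprime_common_divisor[of 2 q q] assms(1) by (auto simp: not_prime_unit)
  then have "\<forall>j\<in>{1..k}. \<exists>e u w p r z. a j = q ^ e * u \<and> 3 * q ^ n - a j = q ^ e * w \<and>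
      \<not> q dvd u \<and> p + r + z = (1::nat) \<and> [w * 2 ^ p = (-1) ^ z * 2 ^ r * u] (mod q)"
    using three_prime_power_complement_cong[OF assms(1)] assms(5) by metis
  then obtain E U W P R Z where factors: "\<And>j. j \<in> {1..k} \<Longrightarrow>
      a j = q ^ E j * U j \<and> 3 * q ^ n - a j = q ^ E j * W j \<and> \<not> q dvd U j \<and>
      P j + R j + Z j = 1 \<and> [W j * 2 ^ P j = (-1) ^ Z j * 2 ^ R j * U j] (mod q)"
    by metis
  have "(\<Prod>j=1..k. U j) = (\<Prod>j=1..k. W j)"
    using prod_cofactors_eq[where x = a and y = "\<lambda>j. 3 * q ^ n - a j", OF _ _ assms(6)]
      factors assms(1) by (metis not_prime_0)
  moreover have "coprime (U j) q" if "j \<in> {1..k}" for j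
    using factors[OF that] assms(1) by (simp add: prime_imp_coprime coprime_commute)
  ultimately have "[2 ^ (\<Sum>j=1..k. P j) = (-1) ^ (\<Sum>j=1..k. Z j) * 2 ^ (\<Sum>j=1..k. R j)] (mod q)"
    using factors by (intro prod_cong_pow2_signs[where u = U and w = W]) auto
  moreover have "(\<Sum>j=1..k. P j) + (\<Sum>j=1..k. R j) + (\<Sum>j=1..k. Z j) = k"
    using factors by (simp add: sum.distrib[symmetric])
  ultimately show ?thesis
    using pow2_int_cong_of_cong \<open>coprime 2 q\<close> assms(4) by metis
qed

end
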